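(* Let $X$ be a Banach space and assume there exists a set $\mathcal A$ of finite-rank bounded linear operators $X\to X$ such that $\sup\{\|\mathrm{Id}-T\|:T\in\mathcal A\}<2$ and such that for every $\varepsilon>0$ and every $x\in X$ there is $T\in\mathcal A$ with $\|x-Tx\|<\varepsilon$. Then $X$ contains no super $\Delta$-point. In particular, this holds if $X$ admits a finite dimensional decomposition whose suppression-unconditional constant is strictly less than $2$ (e.g. an unconditional basis with suppression-unconditional constant less than $2$).
   Context: $X$ is a real or complex Banach space. $x\in S_X$ is a super $\Delta$-point if $\sup_{y\in V}\|x-y\|=2$ for every relatively weakly open subset $V$ of $B_X$ containing $x$. A sequence $(E_n)$ of finite-dimensional subspaces is an FDD of $X$ if every $x\in X$ has a unique representation $x=\sum_nx_n$ with $x_n\in E_n$; it is unconditional if these series converge unconditionally, and its suppression-unconditional constant is $\sup_{A\subseteq\mathbb N}\|P_A\|$ where $P_A(x)=\sum_{n\in A}x_n$. *)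

theory Defs
  imports "HOL-Analysis.Analysis"
begin

definition weak_topology :: "'a::real_normed_vector topology" where
  "weak_topology = topology_generated_by
     {f -` U | (f :: 'a \<Rightarrow> real) U. bounded_linear f \<and> open U}"

definition super_delta_point :: "'a::real_normed_vector \<Rightarrow> bool" where
  "super_delta_point x \<longleftrightarrow> x \<in> sphere 0 1 \<and>
     (\<forall>V. openin (subtopology weak_topology (cball 0 1)) V \<and> x \<in> V
          \<longrightarrow> (SUP y\<in>V. norm (x - y)) = 2)"

definition finite_rank_op :: "('a::real_normed_vector \<Rightarrow> 'a) \<Rightarrow> bool" where
  "finite_rank_op T \<longleftrightarrow> bounded_linear T \<and> (\<exists>B. finite B \<and> range T \<subseteq> span B)"

definition is_FDD :: "(nat \<Rightarrow> 'a::real_normed_vector set) \<Rightarrow> bool" where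
  "is_FDD E \<longleftrightarrow> (\<forall>n. subspace (E n) \<and> (\<exists>B. finite B \<and> E n \<subseteq> span B)) \<and>
     (\<forall>x. \<exists>!c. (\<forall>n. c n \<in> E n) \<and> c sums x)"

definition FDD_coef :: "(nat \<Rightarrow> 'a::real_normed_vector set) \<Rightarrow> 'a \<Rightarrow> nat \<Rightarrow> 'a" where
  "FDD_coef E x = (THE c. (\<forall>n. c n \<in> E n) \<and> c sums x)"

definition unconditional_FDD :: "(nat \<Rightarrow> 'a::real_normed_vector set) \<Rightarrow> bool" where
  "unconditional_FDD E \<longleftrightarrow> is_FDD E \<and> (\<forall>x. (FDD_coef E x has_sum x) UNIV)"

definition FDD_proj :: "(nat \<Rightarrow> 'a::real_normed_vector set) \<Rightarrow> nat set \<Rightarrow> 'a \<Rightarrow> 'a" where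
  "FDD_proj E A x = infsum (FDD_coef E x) A"

end

theory Submission
  imports Defs
begin

text \<open>
  A finite-rank operator \<open>T\<close> is continuous from the weak to the norm topology: writing
  \<open>T y = (\<Sum>c\<in>C. g c y *\<^sub>R c)\<close> over a finite independent \<open>C\<close>, the coordinate functionals
  \<open>g c\<close> are bounded because the coefficients of a vector in a finite-dimensional subspace are
  dominated by its norm. So if \<open>norm (x - T x) + onorm (\<lambda>y. y - T y) < 2\<close>, the relatively
  weakly open neighbourhood \<open>{y \<in> cball 0 1. norm (T y - T x) < \<delta>}\<close> of \<open>x\<close> stays at distance
  at most \<open>norm (x - T x) + \<delta> + onorm (\<lambda>y. y - T y) < 2\<close> from \<open>x\<close>, and \<open>x\<close> is no
  super \<open>\<Delta>\<close>-point. For an unconditional FDD the partial-sum projections are such operators,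
  because \<open>x - P\<^sub>A x = P\<^bsub>-A\<^esub> x\<close>.
\<close>

lemma Cauchy_if_dist_le_Cauchy:
  fixes X :: "nat \<Rightarrow> 'a::metric_space" and Y :: "nat \<Rightarrow> 'b::metric_space"
  assumes "Cauchy X" and "\<And>m n. dist (Y m) (Y n) \<le> M * dist (X m) (X n)"
  shows "Cauchy Y"
proof (rule metric_CauchyI)
  fix e :: real assume "e > 0"
  then have "e / (\<bar>M\<bar> + 1) > 0" by simp
  then obtain N where N: "\<And>m n. m \<ge> N \<Longrightarrow> n \<ge> N \<Longrightarrow> dist (X m) (X n) < e / (\<bar>M\<bar> + 1)"
    using \<open>Cauchy X\<close> metric_CauchyD by blast
  show "\<exists>N. \<forall>m\<ge>N. \<forall>n\<ge>N. dist (Y m) (Y n) < e"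
  proof (intro exI allI impI)
    fix m n assume "m \<ge> N" "n \<ge> N"
    have "M * dist (X m) (X n) \<le> (\<bar>M\<bar> + 1) * dist (X m) (X n)"
      by (intro mult_right_mono) auto
    then have "dist (Y m) (Y n) \<le> (\<bar>M\<bar> + 1) * dist (X m) (X n)"
      using assms(2)[of m n] by linarith
    also have "\<dots> < e"
      using N[OF \<open>m \<ge> N\<close> \<open>n \<ge> N\<close>] by (simp add: field_simps)
    finally show "dist (Y m) (Y n) < e" .
  qed
qed

lemma closed_span_if_coefficients_bounded:
  fixes C :: "'a::real_normed_vector set"
  assumes "finite C"
    and bound: "\<And>u b. b \<in> C \<Longrightarrow> \<bar>u b\<bar> \<le> M * norm (\<Sum>c\<in>C. u c *\<^sub>R c)"
  shows "closed (span C)"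
  unfolding closed_sequential_limits
proof (intro allI impI, elim conjE)
  fix x l assume "\<forall>n. x n \<in> span C" and "x \<longlonglongrightarrow> l"
  then have "\<forall>n. \<exists>v. x n = (\<Sum>c\<in>C. v c *\<^sub>R c)"
    by (auto simp: span_finite[OF \<open>finite C\<close>] image_iff)
  then obtain u where u: "\<And>n. x n = (\<Sum>c\<in>C. u n c *\<^sub>R c)"
    by metis
  have conv: "convergent (\<lambda>n. u n c)" if "c \<in> C" for c
  proof -
    have "dist (u m c) (u n c) \<le> M * dist (x m) (x n)" for m n
      using bound[OF that, of "\<lambda>c. u m c - u n c"]
      by (simp add: u dist_norm dist_real_def sum_subtractf scaleR_diff_left)
    then have "Cauchy (\<lambda>n. u n c)"
      by (rule Cauchy_if_dist_le_Cauchy[OF LIMSEQ_imp_Cauchy[OF \<open>x \<longlonglongrightarrow> l\<close>]])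
    then show ?thesis
      by (simp add: Cauchy_convergent_iff)
  qed
  have "(\<lambda>n. \<Sum>c\<in>C. u n c *\<^sub>R c) \<longlonglongrightarrow> (\<Sum>c\<in>C. lim (\<lambda>n. u n c) *\<^sub>R c)"
    by (intro tendsto_sum tendsto_scaleR tendsto_const) (use conv in \<open>simp add: convergent_LIMSEQ_iff\<close>)
  moreover have "x = (\<lambda>n. \<Sum>c\<in>C. u n c *\<^sub>R c)"
    by (rule ext) (rule u)
  ultimately have "x \<longlonglongrightarrow> (\<Sum>c\<in>C. lim (\<lambda>n. u n c) *\<^sub>R c)"
    by simp
  then have "l = (\<Sum>c\<in>C. lim (\<lambda>n. u n c) *\<^sub>R c)"
    using \<open>x \<longlonglongrightarrow> l\<close> LIMSEQ_unique by blast
  then show "l \<in> span C"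
    by (auto simp: span_finite[OF \<open>finite C\<close>])
qed

lemma abs_scaleR_infdist_le_norm_add:
  fixes a :: "'a::real_normed_vector"
  assumes "subspace S" and "w \<in> S"
  shows "\<bar>t\<bar> * infdist a S \<le> norm (t *\<^sub>R a + w)"
proof (cases "t = 0")
  case False
  have "infdist a S \<le> dist a (- (1/t) *\<^sub>R w)"
    using assms by (intro infdist_le) (simp add: subspace_neg subspace_scale)
  also have "\<dots> = norm ((1/t) *\<^sub>R (t *\<^sub>R a + w))"
    using False by (simp add: dist_norm scaleR_add_right)
  also have "\<dots> = norm (t *\<^sub>R a + w) / \<bar>t\<bar>"
    by simp
  finally show ?thesis
    using False by (simp add: pos_le_divide_eq mult.commute)
qed simp

lemma coefficients_bounded_insert:
  fixes C :: "'a::real_normed_vector set"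
  assumes "finite C" and "a \<notin> span C" and "M > 0"
    and bound: "\<And>u b. b \<in> C \<Longrightarrow> \<bar>u b\<bar> \<le> M * norm (\<Sum>c\<in>C. u c *\<^sub>R c)"
  shows "\<exists>M'>0. \<forall>u. \<forall>b\<in>insert a C. \<bar>u b\<bar> \<le> M' * norm (\<Sum>c\<in>insert a C. u c *\<^sub>R c)"
proof -
  define d where "d = infdist a (span C)"
  have "closed (span C)"
    using \<open>finite C\<close> bound by (rule closed_span_if_coefficients_bounded)
  then have "d \<noteq> 0"
    using in_closed_iff_infdist_zero[of "span C" a] \<open>a \<notin> span C\<close> span_zero
    by (auto simp: d_def)
  then have "d > 0"
    using infdist_nonneg[of a "span C"] by (simp add: d_def)
  have "a \<notin> C"
    using \<open>a \<notin> span C\<close> span_base by blast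
  then have sum_insert: "(\<Sum>c\<in>insert a C. u c *\<^sub>R c) = u a *\<^sub>R a + (\<Sum>c\<in>C. u c *\<^sub>R c)" for u
    using \<open>finite C\<close> by simp
  have new: "\<bar>u a\<bar> \<le> norm (\<Sum>c\<in>insert a C. u c *\<^sub>R c) / d" for u
  proof -
    have "(\<Sum>c\<in>C. u c *\<^sub>R c) \<in> span C"
      by (intro span_sum span_scale span_base)
    then have "\<bar>u a\<bar> * d \<le> norm (\<Sum>c\<in>insert a C. u c *\<^sub>R c)"
      unfolding d_def sum_insert by (intro abs_scaleR_infdist_le_norm_add subspace_span)
    then show ?thesis
      using \<open>d > 0\<close> by (simp add: pos_le_divide_eq)
  qed
  have old: "\<bar>u b\<bar> \<le> M * (1 + norm a / d) * norm (\<Sum>c\<in>insert a C. u c *\<^sub>R c)"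
    if "b \<in> C" for u b
  proof -
    let ?v = "norm (\<Sum>c\<in>insert a C. u c *\<^sub>R c)"
    have "norm (\<Sum>c\<in>C. u c *\<^sub>R c) \<le> ?v + \<bar>u a\<bar> * norm a"
      using norm_triangle_ineq4[of "\<Sum>c\<in>insert a C. u c *\<^sub>R c" "u a *\<^sub>R a"] by (simp add: sum_insert)
    also have "\<dots> \<le> ?v + ?v / d * norm a"
      using mult_right_mono[OF new norm_ge_zero] by simp
    finally have "M * norm (\<Sum>c\<in>C. u c *\<^sub>R c) \<le> M * (?v + ?v / d * norm a)"
      using \<open>M > 0\<close> by simp
    then show ?thesis
      using bound[OF that, of u] by (simp add: algebra_simps)
  qed
  define M' where "M' = max (1/d) (M * (1 + norm a / d))"
  have "\<bar>u b\<bar> \<le> M' * norm (\<Sum>c\<in>insert a C. u c *\<^sub>R c)" if "b \<in> insert a C" for u b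
  proof (cases "b = a")
    case True
    then show ?thesis
      using new[of u] mult_right_mono[of "1/d" M' "norm (\<Sum>c\<in>insert a C. u c *\<^sub>R c)"]
      by (simp add: M'_def)
  next
    case False
    then show ?thesis
      using that old[of b u] mult_right_mono[of "M * (1 + norm a / d)" M' "norm (\<Sum>c\<in>insert a C. u c *\<^sub>R c)"]
      by (simp add: M'_def)
  qed
  moreover have "M' > 0"
    using \<open>d > 0\<close> by (simp add: M'_def less_max_iff_disj)
  ultimately show ?thesis
    by blast
qed

lemma coefficients_bounded_if_independent:
  fixes C :: "'a::real_normed_vector set"
  assumes "finite C" and "independent C"
  shows "\<exists>M>0. \<forall>u. \<forall>b\<in>C. \<bar>u b\<bar> \<le> M * norm (\<Sum>c\<in>C. u c *\<^sub>R c)"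
  using assms
proof (induction C rule: finite_induct)
  case empty
  show ?case by (auto intro: exI[of _ 1])
next
  case (insert a C)
  then have "independent C" and "a \<notin> span C"
    by (auto simp: independent_insert)
  then obtain M where "M > 0" and "\<forall>u. \<forall>b\<in>C. \<bar>u b\<bar> \<le> M * norm (\<Sum>c\<in>C. u c *\<^sub>R c)"
    using insert.IH by blast
  then show ?case
    using coefficients_bounded_insert[OF \<open>finite C\<close> \<open>a \<notin> span C\<close>] by blast
qed

lemma finite_rank_op_expansion:
  fixes T :: "'a::real_normed_vector \<Rightarrow> 'a"
  assumes "finite_rank_op T"
  obtains C g where "finite C" and "\<And>c. c \<in> C \<Longrightarrow> bounded_linear (g c)"
    and "\<And>y. T y = (\<Sum>c\<in>C. g c y *\<^sub>R c)"
proof -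
  obtain B where T: "bounded_linear T" and "finite B" and "range T \<subseteq> span B"
    using assms unfolding finite_rank_op_def by blast
  obtain C where "C \<subseteq> B" and "independent C" and "B \<subseteq> span C"
    using maximal_independent_subset[of B] by blast
  then have "finite C"
    using \<open>finite B\<close> finite_subset by blast
  have T_span: "T y \<in> span C" for y
    using \<open>range T \<subseteq> span B\<close> \<open>B \<subseteq> span C\<close> span_mono span_span by blast
  obtain M where "M > 0" and M: "\<And>u b. b \<in> C \<Longrightarrow> \<bar>u b\<bar> \<le> M * norm (\<Sum>c\<in>C. u c *\<^sub>R c)"
    using coefficients_bounded_if_independent[OF \<open>finite C\<close> \<open>independent C\<close>] by blast
  obtain K where K: "\<And>x. norm (T x) \<le> norm x * K"
    using T bounded_linear.bounded by blast
  define g where "g c y = representation C (T y) c" for c y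
  have T_sum: "T y = (\<Sum>c\<in>C. g c y *\<^sub>R c)" for y
    unfolding g_def using sum_representation_eq[OF \<open>independent C\<close> T_span \<open>finite C\<close> order_refl] by simp
  have "bounded_linear (g c)" if "c \<in> C" for c
  proof (rule bounded_linear_intro[where K = "M * K"])
    show "g c (x + y) = g c x + g c y" for x y
      unfolding g_def by (simp add: linear_add[OF bounded_linear.linear[OF T]]
          representation_add[OF \<open>independent C\<close> T_span T_span])
    show "g c (r *\<^sub>R x) = r *\<^sub>R g c x" for r x
      unfolding g_def by (simp add: linear_scale[OF bounded_linear.linear[OF T]]
          representation_scale[OF \<open>independent C\<close> T_span])
    show "norm (g c x) \<le> norm x * (M * K)" for x
    proof -
      have "\<bar>g c x\<bar> \<le> M * norm (T x)"
        using M[OF that, of "\<lambda>c. g c x"] T_sum[of x] by simp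
      also have "\<dots> \<le> M * (norm x * K)"
        using K \<open>M > 0\<close> by (intro mult_left_mono) auto
      finally show ?thesis
        by (simp add: algebra_simps)
    qed
  qed
  with \<open>finite C\<close> T_sum show thesis
    using that by blast
qed

lemma topspace_weak_topology [simp]: "topspace (weak_topology :: 'a::real_normed_vector topology) = UNIV"
proof -
  have "(\<lambda>_::'a. 0::real) -` UNIV \<in> {f -` U | (f :: 'a \<Rightarrow> real) U. bounded_linear f \<and> open U}"
    by (intro CollectI exI[of _ "\<lambda>_. 0"] exI[of _ UNIV]) (auto intro: bounded_linear_zero)
  then show ?thesis
    unfolding weak_topology_def topology_generated_by_topspace by auto
qed

lemma continuous_map_weak_topology_bounded_linear:
  fixes f :: "'a::real_normed_vector \<Rightarrow> real"
  assumes "bounded_linear f"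
  shows "continuous_map weak_topology euclideanreal f"
  unfolding continuous_map_def weak_topology_def[symmetric]
proof (intro conjI allI impI)
  fix U :: "real set" assume "openin euclideanreal U"
  then have "openin weak_topology (f -` U)"
    unfolding weak_topology_def using assms by (intro topology_generated_by_Basis) auto
  then show "openin weak_topology {x \<in> topspace weak_topology. f x \<in> U}"
    by (simp add: vimage_def)
qed simp

lemma continuous_map_weak_topology_finite_rank_op:
  fixes T :: "'a::real_normed_vector \<Rightarrow> 'a"
  assumes "finite_rank_op T"
  shows "continuous_map weak_topology euclidean T"
proof -
  obtain C g where "finite C" and g: "\<And>c. c \<in> C \<Longrightarrow> bounded_linear (g c)"
    and T: "\<And>y. T y = (\<Sum>c\<in>C. g c y *\<^sub>R c)"
    using finite_rank_op_expansion[OF assms] by blast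
  have "continuous_map weak_topology euclidean (\<lambda>y. g c y *\<^sub>R c)" if "c \<in> C" for c
    using continuous_map_weak_topology_bounded_linear[OF g[OF that]]
    by (simp add: continuous_map_atin tendsto_scaleR)
  then have "continuous_map weak_topology euclidean (\<lambda>y. \<Sum>c\<in>C. g c y *\<^sub>R c)"
    using \<open>finite C\<close> by (intro continuous_map_sum)
  moreover have "T = (\<lambda>y. \<Sum>c\<in>C. g c y *\<^sub>R c)"
    by (rule ext) (rule T)
  ultimately show ?thesis
    by simp
qed

lemma not_super_delta_point_if_weakly_continuous:
  fixes T :: "'a::real_normed_vector \<Rightarrow> 'a"
  assumes "bounded_linear T" and "continuous_map weak_topology euclidean T"
    and "norm (x - T x) + onorm (\<lambda>y. y - T y) < 2"
  shows "\<not> super_delta_point x"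
proof
  assume sd: "super_delta_point x"
  define K where "K = onorm (\<lambda>y. y - T y)"
  define \<delta> where "\<delta> = (2 - norm (x - T x) - K) / 2"
  have "\<delta> > 0"
    using assms(3) by (simp add: \<delta>_def K_def)
  define V where "V = {y. T y \<in> ball (T x) \<delta>} \<inter> cball 0 1"
  have "openin (subtopology weak_topology (cball 0 1)) V"
    unfolding V_def
    using openin_continuous_map_preimage[OF assms(2), of "ball (T x) \<delta>"]
    by (intro openin_subtopology_Int) simp
  moreover have "x \<in> V"
    using sd \<open>\<delta> > 0\<close> by (simp add: V_def super_delta_point_def)
  ultimately have sup_eq: "(SUP y\<in>V. norm (x - y)) = 2"
    using sd by (simp add: super_delta_point_def)
  have "bounded_linear (\<lambda>y. y - T y)"
    using assms(1) by (intro bounded_linear_sub bounded_linear_ident)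
  have "norm (x - y) \<le> 2 - \<delta>" if "y \<in> V" for y
  proof -
    have "norm (y - T y) \<le> onorm (\<lambda>y. y - T y) * norm y"
      using onorm[OF \<open>bounded_linear (\<lambda>y. y - T y)\<close>] by simp
    also have "\<dots> \<le> onorm (\<lambda>y. y - T y)"
      using that onorm_pos_le[OF \<open>bounded_linear (\<lambda>y. y - T y)\<close>]
      by (simp add: V_def mult_left_le)
    finally have "norm (T y - y) \<le> K"
      by (simp add: norm_minus_commute K_def)
    moreover have "norm (T x - T y) < \<delta>"
      using that by (simp add: V_def dist_norm)
    moreover have "norm (x - y) \<le> norm (x - T x) + norm (T x - T y) + norm (T y - y)"
      using norm_triangle_ineq[of "x - T x" "T x - T y"] norm_triangle_ineq[of "x - T y" "T y - y"]
      by simp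
    ultimately show ?thesis
      unfolding \<delta>_def by argo
  qed
  then have "(SUP y\<in>V. norm (x - y)) \<le> 2 - \<delta>"
    using \<open>x \<in> V\<close> by (intro cSUP_least) auto
  then show False
    using sup_eq \<open>\<delta> > 0\<close> by simp
qed

lemma not_super_delta_point_if_finite_rank_approximable:
  fixes \<A> :: "('a::real_normed_vector \<Rightarrow> 'a) set" and x :: 'a
  assumes "\<forall>T\<in>\<A>. finite_rank_op T" and "K < 2" and "\<forall>T\<in>\<A>. onorm (\<lambda>x. x - T x) \<le> K"
    and "\<forall>\<epsilon>>0. \<forall>x. \<exists>T\<in>\<A>. norm (x - T x) < \<epsilon>"
  shows "\<not> super_delta_point x"
proof -
  have "2 - K > 0"
    using assms(2) by simp
  then obtain T where "T \<in> \<A>" and close: "norm (x - T x) < 2 - K"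
    using assms(4) by blast
  then have "finite_rank_op T" and "onorm (\<lambda>x. x - T x) \<le> K"
    using assms(1,3) by blast+
  show ?thesis
  proof (rule not_super_delta_point_if_weakly_continuous)
    show "bounded_linear T"
      using \<open>finite_rank_op T\<close> by (simp add: finite_rank_op_def)
    show "continuous_map weak_topology euclidean T"
      using \<open>finite_rank_op T\<close> by (rule continuous_map_weak_topology_finite_rank_op)
    show "norm (x - T x) + onorm (\<lambda>y. y - T y) < 2"
      using close \<open>onorm (\<lambda>x. x - T x) \<le> K\<close> by simp
  qed
qed

lemma FDD_coef_spec:
  assumes "is_FDD E"
  shows "FDD_coef E x n \<in> E n" and "FDD_coef E x sums x"
proof -
  have "\<exists>!c. (\<forall>n. c n \<in> E n) \<and> c sums x"
    using assms by (simp add: is_FDD_def)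
  then have "(\<forall>n. FDD_coef E x n \<in> E n) \<and> FDD_coef E x sums x"
    unfolding FDD_coef_def by (rule theI')
  then show "FDD_coef E x n \<in> E n" and "FDD_coef E x sums x"
    by blast+
qed

lemma FDD_coef_unique:
  assumes "is_FDD E" and "\<And>n. c n \<in> E n" and "c sums x"
  shows "FDD_coef E x = c"
proof -
  have "\<exists>!c. (\<forall>n. c n \<in> E n) \<and> c sums x"
    using assms(1) by (simp add: is_FDD_def)
  then show ?thesis
    unfolding FDD_coef_def by (rule the1_equality) (use assms(2,3) in blast)
qed

lemma FDD_coef_add:
  assumes "is_FDD E"
  shows "FDD_coef E (x + y) = (\<lambda>n. FDD_coef E x n + FDD_coef E y n)"
  using assms FDD_coef_spec[OF assms]
  by (intro FDD_coef_unique) (auto simp: is_FDD_def intro: subspace_add sums_add)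

lemma FDD_coef_scaleR:
  assumes "is_FDD E"
  shows "FDD_coef E (r *\<^sub>R x) = (\<lambda>n. r *\<^sub>R FDD_coef E x n)"
  using assms FDD_coef_spec[OF assms]
  by (intro FDD_coef_unique) (auto simp: is_FDD_def intro: subspace_scale sums_scaleR_right)

lemma FDD_proj_atMost: "FDD_proj E {..n} x = (\<Sum>k\<le>n. FDD_coef E x k)"
  by (simp add: FDD_proj_def)

lemma FDD_proj_atMost_tendsto:
  assumes "is_FDD E"
  shows "(\<lambda>n. FDD_proj E {..n} x) \<longlonglongrightarrow> x"
  using FDD_coef_spec(2)[OF assms, of x]
  by (simp add: FDD_proj_atMost sums_def LIMSEQ_lessThan_iff_atMost)

lemma finite_rank_op_FDD_proj_atMost:
  assumes "is_FDD E" and bound: "\<And>x. norm (FDD_proj E {..n} x) \<le> K * norm x"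
  shows "finite_rank_op (FDD_proj E {..n})"
proof -
  have "\<forall>k. \<exists>B. finite B \<and> E k \<subseteq> span B"
    using assms(1) by (simp add: is_FDD_def)
  then obtain B where B: "\<And>k. finite (B k) \<and> E k \<subseteq> span (B k)"
    by metis
  have "bounded_linear (FDD_proj E {..n})"
  proof (rule bounded_linear_intro[where K = K])
    show "FDD_proj E {..n} (x + y) = FDD_proj E {..n} x + FDD_proj E {..n} y" for x y
      by (simp add: FDD_proj_atMost FDD_coef_add[OF assms(1)] sum.distrib)
    show "FDD_proj E {..n} (r *\<^sub>R x) = r *\<^sub>R FDD_proj E {..n} x" for r x
      by (simp add: FDD_proj_atMost FDD_coef_scaleR[OF assms(1)] scaleR_sum_right)
    show "norm (FDD_proj E {..n} x) \<le> norm x * K" for x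
      using bound[of x] by (simp add: mult.commute)
  qed
  moreover have "FDD_proj E {..n} x \<in> span (\<Union>k\<le>n. B k)" for x
    unfolding FDD_proj_atMost
  proof (intro span_sum)
    fix k assume "k \<in> {..n}"
    then have "span (B k) \<subseteq> span (\<Union>k\<le>n. B k)"
      by (intro span_mono) auto
    moreover have "FDD_coef E x k \<in> span (B k)"
      using FDD_coef_spec(1)[OF assms(1), of x k] B[of k] by blast
    ultimately show "FDD_coef E x k \<in> span (\<Union>k\<le>n. B k)"
      by blast
  qed
  moreover have "finite (\<Union>k\<le>n. B k)"
    using B by auto
  ultimately show ?thesis
    unfolding finite_rank_op_def by blast
qed

lemma FDD_proj_Compl:
  fixes E :: "nat \<Rightarrow> 'a::banach set"
  assumes "unconditional_FDD E"
  shows "FDD_proj E (- A) x = x - FDD_proj E A x"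
proof -
  have sum_x: "(FDD_coef E x has_sum x) UNIV"
    using assms by (simp add: unconditional_FDD_def)
  then have summable: "FDD_coef E x summable_on B" for B
    using summable_on_subset_banach[OF has_sum_imp_summable] by blast
  have "x = infsum (FDD_coef E x) (A \<union> - A)"
    using sum_x by (simp add: infsumI)
  also have "\<dots> = FDD_proj E A x + FDD_proj E (- A) x"
    unfolding FDD_proj_def by (rule infsum_Un_disjoint[OF summable summable]) simp
  finally show ?thesis
    by (metis add_diff_cancel_left')
qed

lemma not_super_delta_point_if_unconditional_FDD:
  fixes E :: "nat \<Rightarrow> 'a::banach set" and x :: 'a
  assumes "unconditional_FDD E" and "K < 2" and bound: "\<forall>A x. norm (FDD_proj E A x) \<le> K * norm x"
  shows "\<not> super_delta_point x"
proof -
  define \<P> where "\<P> = range (\<lambda>n. FDD_proj E {..n})"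
  have "is_FDD E"
    using assms(1) by (simp add: unconditional_FDD_def)
  \<comment> \<open>\<open>onorm_bound\<close> needs a nonnegative constant\<close>
  have bound': "norm (FDD_proj E A y) \<le> max K 0 * norm y" for A y
  proof -
    have "K * norm y \<le> max K 0 * norm y"
      by (intro mult_right_mono) auto
    with bound show ?thesis
      by (meson order_trans)
  qed
  have "\<forall>T\<in>\<P>. finite_rank_op T"
    unfolding \<P>_def using finite_rank_op_FDD_proj_atMost[OF \<open>is_FDD E\<close> bound'] by auto
  moreover have "\<forall>T\<in>\<P>. onorm (\<lambda>y. y - T y) \<le> max K 0"
    unfolding \<P>_def using bound'
    by (auto intro!: onorm_bound simp flip: FDD_proj_Compl[OF assms(1)])
  moreover have "\<exists>T\<in>\<P>. norm (y - T y) < \<epsilon>" if "\<epsilon> > 0" for \<epsilon> y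
  proof -
    obtain n where "norm (FDD_proj E {..n} y - y) < \<epsilon>"
      using LIMSEQ_D[OF FDD_proj_atMost_tendsto[OF \<open>is_FDD E\<close>] \<open>\<epsilon> > 0\<close>] by blast
    then show ?thesis
      by (auto simp: \<P>_def norm_minus_commute)
  qed
  moreover have "max K 0 < 2"
    using \<open>K < 2\<close> by simp
  ultimately show ?thesis
    using not_super_delta_point_if_finite_rank_approximable[of \<P> "max K 0" x] by blast
qed

theorem mainTheorem5:
  fixes X_type :: "'a::banach itself"
  shows "(\<forall>\<A> :: ('a \<Rightarrow> 'a) set.
            (\<forall>T\<in>\<A>. finite_rank_op T)
          \<and> (\<exists>K<2. \<forall>T\<in>\<A>. onorm (\<lambda>x. x - T x) \<le> K)
          \<and> (\<forall>\<epsilon>>0. \<forall>x. \<exists>T\<in>\<A>. norm (x - T x) < \<epsilon>)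
          \<longrightarrow> \<not> (\<exists>x::'a. super_delta_point x))
       \<and> (\<forall>E :: nat \<Rightarrow> 'a set.
            unconditional_FDD E
          \<and> (\<exists>K<2. \<forall>A x. norm (FDD_proj E A x) \<le> K * norm x)
          \<longrightarrow> \<not> (\<exists>x::'a. super_delta_point x))"
proof (intro conjI allI impI notI; elim conjE exE)
  fix \<A> :: "('a \<Rightarrow> 'a) set" and K and x :: 'a
  assume "\<forall>T\<in>\<A>. finite_rank_op T" and "K < 2" and "\<forall>T\<in>\<A>. onorm (\<lambda>x. x - T x) \<le> K"
    and "\<forall>\<epsilon>>0. \<forall>x. \<exists>T\<in>\<A>. norm (x - T x) < \<epsilon>" and "super_delta_point x"
  then show False
    using not_super_delta_point_if_finite_rank_approximable by blast
next
  fix E :: "nat \<Rightarrow> 'a set" and K and x :: 'a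
  assume "unconditional_FDD E" and "K < 2" and "\<forall>A x. norm (FDD_proj E A x) \<le> K * norm x"
    and "super_delta_point x"
  then show False
    using not_super_delta_point_if_unconditional_FDD by blast
qed

end
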